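(* Let $A\in\mathbb{R}^{n\times n}$ be monotone and let $A=P_1-R_1+S_1=P_2-R_2+S_2$ be two double weak regular splittings of $A$. Suppose $A=P_3-R_3+S_3$ is a double regular splitting with $1\notin\sigma(S_3P_i^{-1})$ and $\widehat{A}_i^{-1}\geq 0$ for $i=1,2$, where $\widehat{A}_i=(I-S_3P_i^{-1})A$. Let $\widehat{P}_i=P_3$ and $\widehat{R}_i=R_3-S_3P_i^{-1}R_i$. If $\widehat{P}_1^{-1}\widehat{A}_1\geq\widehat{P}_2^{-1}\widehat{A}_2$ and $\widehat{P}_1^{-1}\widehat{R}_1\geq\widehat{P}_2^{-1}\widehat{R}_2$, then $\rho(W_{13})\leq\rho(W_{23})<1$, where for $i=1,2$ $$W_{i3}=\begin{pmatrix} P_3^{-1}R_3-P_3^{-1}S_3P_i^{-1}R_i & P_3^{-1}S_3P_i^{-1}S_i\\ I & 0\end{pmatrix}.$$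
   Context: Inequalities are entrywise; $\rho$ is the spectral radius, $\sigma$ the spectrum. $A$ is monotone if $A$ is nonsingular and $A^{-1}\geq 0$. A double splitting $A=P-R+S$ with $P$ nonsingular is a double regular splitting if $P^{-1}\geq0$, $R\geq0$, $S\leq0$, and a double weak regular splitting if $P^{-1}\geq 0$, $P^{-1}R\geq0$, $P^{-1}S\leq0$. *)

theory Defs
  imports "Jordan_Normal_Form.Spectral_Radius" "Jordan_Normal_Form.Gauss_Jordan_Elimination"
begin

definition minv :: "real mat \<Rightarrow> real mat" where
  "minv A = the (mat_inverse A)"

definition mat_le :: "real mat \<Rightarrow> real mat \<Rightarrow> bool" where
  "mat_le A B \<longleftrightarrow> dim_row A = dim_row B \<and> dim_col A = dim_col B \<and>
     (\<forall>i < dim_row A. \<forall>j < dim_col A. A $$ (i,j) \<le> B $$ (i,j))"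

definition nonneg_mat :: "real mat \<Rightarrow> bool" where
  "nonneg_mat A \<longleftrightarrow> (\<forall>i < dim_row A. \<forall>j < dim_col A. 0 \<le> A $$ (i,j))"

definition nonpos_mat :: "real mat \<Rightarrow> bool" where
  "nonpos_mat A \<longleftrightarrow> (\<forall>i < dim_row A. \<forall>j < dim_col A. A $$ (i,j) \<le> 0)"

definition rspectrum :: "real mat \<Rightarrow> complex set" where
  "rspectrum A = spectrum (map_mat complex_of_real A)"

definition rho :: "real mat \<Rightarrow> real" where
  "rho A = spectral_radius (map_mat complex_of_real A)"

definition monotone_mat :: "real mat \<Rightarrow> bool" where
  "monotone_mat A \<longleftrightarrow> invertible_mat A \<and> nonneg_mat (minv A)"

definition double_splitting :: "nat \<Rightarrow> real mat \<Rightarrow> real mat \<Rightarrow> real mat \<Rightarrow> real mat \<Rightarrow> bool" where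
  "double_splitting n A P R S \<longleftrightarrow>
     A \<in> carrier_mat n n \<and> P \<in> carrier_mat n n \<and> R \<in> carrier_mat n n \<and> S \<in> carrier_mat n n \<and>
     invertible_mat P \<and> A = P - R + S"

definition double_regular_splitting :: "nat \<Rightarrow> real mat \<Rightarrow> real mat \<Rightarrow> real mat \<Rightarrow> real mat \<Rightarrow> bool" where
  "double_regular_splitting n A P R S \<longleftrightarrow>
     double_splitting n A P R S \<and> nonneg_mat (minv P) \<and> nonneg_mat R \<and> nonpos_mat S"

definition double_weak_regular_splitting :: "nat \<Rightarrow> real mat \<Rightarrow> real mat \<Rightarrow> real mat \<Rightarrow> real mat \<Rightarrow> bool" where
  "double_weak_regular_splitting n A P R S \<longleftrightarrow>
     double_splitting n A P R S \<and> nonneg_mat (minv P) \<and> nonneg_mat (minv P * R) \<and> nonpos_mat (minv P * S)"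

definition W_mat :: "nat \<Rightarrow> real mat \<Rightarrow> real mat \<Rightarrow> real mat \<Rightarrow> real mat \<Rightarrow> real mat \<Rightarrow> real mat \<Rightarrow> real mat" where
  "W_mat n P3 R3 S3 Pk Rk Sk =
     four_block_mat (minv P3 * R3 - minv P3 * S3 * minv Pk * Rk) (minv P3 * S3 * minv Pk * Sk)
                    (1\<^sub>m n) (0\<^sub>m n n)"

end

theory Submission
  imports Defs
begin

text \<open>
  Write \<open>B\<^sub>i = P\<^sub>3\<^sup>-\<^sup>1R\<^sub>3 - P\<^sub>3\<^sup>-\<^sup>1S\<^sub>3P\<^sub>i\<^sup>-\<^sup>1R\<^sub>i\<close> and
  \<open>C\<^sub>i = P\<^sub>3\<^sup>-\<^sup>1S\<^sub>3P\<^sub>i\<^sup>-\<^sup>1S\<^sub>i\<close>. The sign conditions on the splittings make both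
  nonnegative, \<open>W\<^sub>i\<^sub>3\<close> is the block companion matrix \<open>[B\<^sub>i, C\<^sub>i; I, 0]\<close>, and
  \<open>P\<^sub>3\<^sup>-\<^sup>1Ahat\<^sub>i = I - B\<^sub>i - C\<^sub>i\<close> for \<open>Ahat\<^sub>i = (I - S\<^sub>3P\<^sub>i\<^sup>-\<^sup>1)A\<close>, so the two
  comparison hypotheses say \<open>B\<^sub>2 \<le> B\<^sub>1\<close> and \<open>B\<^sub>1 + C\<^sub>1 \<le> B\<^sub>2 + C\<^sub>2\<close>.

  For a nonnegative matrix \<open>W\<close>, a positive vector \<open>x\<close> with \<open>W x \<le> \<beta> x\<close> forces
  \<open>\<rho>(W) \<le> \<beta>\<close> (compare an eigenvector entrywise with \<open>x\<close>), and conversely such an \<open>x\<close>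
  exists for every \<open>\<beta> > \<rho>(W)\<close> (a truncated Neumann series). With \<open>e\<close> the all-ones
  vector, \<open>u = Ahat\<^sub>2\<^sup>-\<^sup>1e\<close> is positive and satisfies \<open>(B\<^sub>2 + C\<^sub>2) u = u - P\<^sub>3\<^sup>-\<^sup>1e < u\<close>, whence
  \<open>W\<^sub>2\<^sub>3\<^sup>2 (u, u) < (u, u)\<close> and \<open>\<rho>(W\<^sub>2\<^sub>3) < 1\<close>. Finally, for \<open>\<rho>(W\<^sub>2\<^sub>3) < \<beta> < 1\<close>
  a positive \<open>(u, v)\<close> with \<open>W\<^sub>2\<^sub>3(u, v) \<le> \<beta>(u, v)\<close> yields \<open>W\<^sub>1\<^sub>3(u, u/\<beta>) \<le> \<beta>(u, u/\<beta>)\<close>,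
  because \<open>\<beta>B\<^sub>1 + C\<^sub>1 \<le> \<beta>B\<^sub>2 + C\<^sub>2\<close>; hence \<open>\<rho>(W\<^sub>1\<^sub>3) \<le> \<rho>(W\<^sub>2\<^sub>3)\<close>.
\<close>

lemma mult_nonneg_nonneg_mat:
  assumes "A \<in> carrier_mat n k" "B \<in> carrier_mat k m" "nonneg_mat A" "nonneg_mat B"
  shows "nonneg_mat (A * B)"
  using assms unfolding nonneg_mat_def
  by (auto simp: scalar_prod_def intro!: sum_nonneg mult_nonneg_nonneg)

lemma mult_nonneg_nonpos_mat:
  assumes "A \<in> carrier_mat n k" "B \<in> carrier_mat k m" "nonneg_mat A" "nonpos_mat B"
  shows "nonpos_mat (A * B)"
  using assms unfolding nonneg_mat_def nonpos_mat_def
  by (auto simp: scalar_prod_def intro!: sum_nonpos mult_nonneg_nonpos)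

lemma mult_nonpos_nonneg_mat:
  assumes "A \<in> carrier_mat n k" "B \<in> carrier_mat k m" "nonpos_mat A" "nonneg_mat B"
  shows "nonpos_mat (A * B)"
  using assms unfolding nonneg_mat_def nonpos_mat_def
  by (auto simp: scalar_prod_def intro!: sum_nonpos mult_nonpos_nonneg)

lemma mult_nonpos_nonpos_mat:
  assumes "A \<in> carrier_mat n k" "B \<in> carrier_mat k m" "nonpos_mat A" "nonpos_mat B"
  shows "nonneg_mat (A * B)"
  using assms unfolding nonpos_mat_def nonneg_mat_def
  by (auto simp: scalar_prod_def intro!: sum_nonneg mult_nonpos_nonpos)

lemma nonneg_mat_minus_nonpos:
  assumes "A \<in> carrier_mat nr nc" "B \<in> carrier_mat nr nc" "nonneg_mat A" "nonpos_mat B"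
  shows "nonneg_mat (A - B)"
  unfolding nonneg_mat_def
proof (intro allI impI)
  fix i j assume "i < dim_row (A - B)" "j < dim_col (A - B)"
  then have ij: "i < nr" "j < nc" using assms(2) by auto
  then have "0 \<le> A $$ (i,j)" "B $$ (i,j) \<le> 0"
    using assms unfolding nonneg_mat_def nonpos_mat_def by auto
  then show "0 \<le> (A - B) $$ (i,j)" using ij assms(2) by simp
qed

lemma nonneg_mat_pow:
  assumes "A \<in> carrier_mat n n" "nonneg_mat A"
  shows "nonneg_mat (A ^\<^sub>m k)"
proof (induction k)
  case (Suc k)
  then show ?case
    using mult_nonneg_nonneg_mat[OF pow_carrier_mat[OF assms(1)] assms(1) Suc.IH assms(2)] by simp
qed (auto simp: nonneg_mat_def)

lemma mult_mat_vec_mono: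
  fixes M :: "real mat"
  assumes "M \<in> carrier_mat nr nc" "nonneg_mat M" "y \<le> z" "z \<in> carrier_vec nc"
  shows "M *\<^sub>v y \<le> M *\<^sub>v z"
  using assms unfolding nonneg_mat_def less_eq_vec_def
  by (auto simp: scalar_prod_def intro!: sum_mono mult_left_mono)

lemma mat_le_add_if_one_minus_le:
  assumes "B1 \<in> carrier_mat n n" "C1 \<in> carrier_mat n n"
    and "B2 \<in> carrier_mat n n" "C2 \<in> carrier_mat n n"
    and "mat_le (1\<^sub>m n - B2 - C2) (1\<^sub>m n - B1 - C1)"
  shows "mat_le (B1 + C1) (B2 + C2)"
  unfolding mat_le_def
proof (intro conjI allI impI)
  fix i j assume "i < dim_row (B1 + C1)" "j < dim_col (B1 + C1)"
  then have ij: "i < n" "j < n" using assms(2) by auto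
  then have "(1\<^sub>m n - B2 - C2) $$ (i,j) \<le> (1\<^sub>m n - B1 - C1) $$ (i,j)"
    using assms unfolding mat_le_def by auto
  then show "(B1 + C1) $$ (i,j) \<le> (B2 + C2) $$ (i,j)" using ij assms(1-4) by simp
qed (use assms in auto)


lemma pow_mat_Suc_left:
  assumes "A \<in> carrier_mat n n"
  shows "A ^\<^sub>m Suc k = A * A ^\<^sub>m k"
proof -
  interpret semiring "ring_mat TYPE('a :: semiring_1) n ()" by (rule semiring_mat)
  have "A \<in> carrier (ring_mat TYPE('a) n ())" using assms by (simp add: ring_mat_simps)
  from nat_pow_Suc2[OF this, of k] show ?thesis
    unfolding pow_mat_ring_pow[OF assms, where b = "()"] by (simp only: ring_mat_simps)
qed

lemma pow_mat_smult:
  fixes A :: "'a :: comm_ring_1 mat"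
  assumes A: "A \<in> carrier_mat n n"
  shows "(a \<cdot>\<^sub>m A) ^\<^sub>m k = a ^ k \<cdot>\<^sub>m A ^\<^sub>m k"
proof (induction k)
  case (Suc k)
  have "(a \<cdot>\<^sub>m A) ^\<^sub>m Suc k = a ^ k \<cdot>\<^sub>m (A ^\<^sub>m k * (a \<cdot>\<^sub>m A))"
    using Suc A by (simp add: mult_smult_assoc_mat[of _ n n _ n])
  also have "\<dots> = a ^ Suc k \<cdot>\<^sub>m A ^\<^sub>m Suc k"
    using A by (simp add: mult_smult_distrib[of _ n n _ n], intro eq_matI) (auto simp: mult_ac)
  finally show ?case .
qed (use A in auto)

lemma invertible_mat_det_nonzero:
  fixes A :: "'a :: comm_ring_1 mat"
  assumes "invertible_mat A"
  shows "det A \<noteq> 0"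
proof -
  from assms obtain B where sq: "dim_row A = dim_col A"
    and AB: "A * B = 1\<^sub>m (dim_row A)" and BA: "B * A = 1\<^sub>m (dim_row B)"
    unfolding invertible_mat_def inverts_mat_def by auto
  have A: "A \<in> carrier_mat (dim_row A) (dim_row A)" using sq by auto
  have "dim_row B = dim_row A" "dim_col B = dim_row A"
    using arg_cong[OF AB, of dim_col] arg_cong[OF BA, of dim_col] sq by auto
  then have B: "B \<in> carrier_mat (dim_row A) (dim_row A)" by auto
  have "det A * det B = 1" using det_mult[OF A B] AB by simp
  then show ?thesis by auto
qed

lemma minv_mat:
  fixes A :: "real mat"
  assumes A: "A \<in> carrier_mat n n" and "det A \<noteq> 0"
  shows "A * minv A = 1\<^sub>m n" "minv A * A = 1\<^sub>m n" "minv A \<in> carrier_mat n n"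
proof -
  have "A \<in> Units (ring_mat TYPE(real) n ())" by (rule det_non_zero_imp_unit[OF A assms(2)])
  then have "mat_inverse A \<noteq> None" using mat_inverse(1)[OF A, where b = "()"] by blast
  then obtain B where "mat_inverse A = Some B" by blast
  then show "A * minv A = 1\<^sub>m n" "minv A * A = 1\<^sub>m n" "minv A \<in> carrier_mat n n"
    using mat_inverse(2)[OF A] unfolding minv_def by auto
qed

lemma det_one_minus_mult_nonzero:
  fixes M A :: "real mat"
  assumes M: "M \<in> carrier_mat n n" and A: "A \<in> carrier_mat n n" and iA: "invertible_mat A"
    and spec: "1 \<notin> rspectrum M"
  shows "det ((1\<^sub>m n - M) * A) \<noteq> 0"
proof -
  have "det (1\<^sub>m n - M) \<noteq> 0"
  proof
    assume "det (1\<^sub>m n - M) = 0"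
    moreover have "char_matrix M 1 = - (1\<^sub>m n - M)"
      using M by (auto simp: char_matrix_def)
    ultimately have "eigenvalue M 1"
      using M det_0_negate[of "1\<^sub>m n - M" n] by (simp add: eigenvalue_det minus_carrier_mat)
    then have "eigenvalue (map_mat complex_of_real M) 1"
      using of_real_hom.eigenvalue_hom[OF M] by fastforce
    with spec show False unfolding rspectrum_def spectrum_def by simp
  qed
  then show ?thesis
    using det_mult[OF minus_carrier_mat[OF M] A] invertible_mat_det_nonzero[OF iA] by simp
qed

lemma nonneg_inverse_row_sum_pos:
  fixes N :: "real mat"
  assumes N: "N \<in> carrier_mat n n" and M: "M \<in> carrier_mat n n"
    and "nonneg_mat N" and NM: "N * M = 1\<^sub>m n" and i: "i < n"
  shows "0 < (N *\<^sub>v vec n (\<lambda>_. 1)) $ i"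
proof -
  have "(\<Sum>k<n. N $$ (i,k) * M $$ (k,i)) = 1"
    using arg_cong[OF NM, of "\<lambda>X. X $$ (i,i)"] N M i
    by (simp add: scalar_prod_def lessThan_atLeast0)
  then have "\<exists>k<n. N $$ (i,k) \<noteq> 0"
    by (metis (no_types, lifting) lessThan_iff mult_zero_left sum.neutral zero_neq_one)
  then obtain k where k: "k < n" "N $$ (i,k) \<noteq> 0" by blast
  have "N $$ (i,k) \<le> (\<Sum>j<n. N $$ (i,j))"
    using assms k unfolding nonneg_mat_def by (intro member_le_sum) auto
  moreover have "0 \<le> N $$ (i,k)" using assms k unfolding nonneg_mat_def by auto
  ultimately show ?thesis using N i k by (simp add: scalar_prod_def lessThan_atLeast0)
qed


section \<open>Spectral radius of nonnegative matrices\<close>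

lemma rho_eq_norm_eigenvalue:
  fixes M :: "real mat"
  assumes "M \<in> carrier_mat m m" "0 < m"
  obtains \<mu> where "eigenvalue (map_mat complex_of_real M) \<mu>" "rho M = norm \<mu>"
  using spectral_radius_mem_max(1)[of "map_mat complex_of_real M" m] assms
  unfolding rho_def spectrum_def by auto

lemma eigenvalue_norm_le_rho:
  fixes M :: "real mat"
  assumes M: "M \<in> carrier_mat m m" and ev: "eigenvalue (map_mat complex_of_real M) \<mu>"
  shows "norm \<mu> \<le> rho M"
proof -
  have Mc: "map_mat complex_of_real M \<in> carrier_mat m m" using M by simp
  show ?thesis
    using spectral_radius_mem_max(2)[OF Mc eigenvalue_imp_nonzero_dim[OF Mc ev]] ev
    unfolding rho_def spectrum_def by auto
qed

lemma rho_nonneg: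
  fixes M :: "real mat"
  assumes "M \<in> carrier_mat m m" "0 < m"
  shows "0 \<le> rho M"
  using rho_eq_norm_eigenvalue[OF assms] by (metis norm_ge_zero)

lemma eigenvalue_smult_mat:
  fixes A :: "'a :: comm_ring_1 mat"
  assumes A: "A \<in> carrier_mat n n" and "eigenvalue A \<mu>"
  shows "eigenvalue (a \<cdot>\<^sub>m A) (a * \<mu>)"
proof -
  obtain v where v: "v \<in> carrier_vec n" "v \<noteq> 0\<^sub>v n" "A *\<^sub>v v = \<mu> \<cdot>\<^sub>v v"
    using assms unfolding eigenvalue_def eigenvector_def by auto
  have "(a \<cdot>\<^sub>m A) *\<^sub>v v = (a * \<mu>) \<cdot>\<^sub>v v"
  proof (rule eq_vecI)
    fix i assume "i < dim_vec ((a * \<mu>) \<cdot>\<^sub>v v)"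
    then have i: "i < n" using v by simp
    have "row A i \<bullet> v = \<mu> * v $ i"
      using arg_cong[OF v(3), of "\<lambda>w. w $ i"] A v(1) i by simp
    then show "((a \<cdot>\<^sub>m A) *\<^sub>v v) $ i = ((a * \<mu>) \<cdot>\<^sub>v v) $ i"
      using A v i by simp
  qed (use A v in simp)
  then show ?thesis using A v unfolding eigenvalue_def eigenvector_def by auto
qed

lemma eigenvalue_pow_mat:
  assumes "A \<in> carrier_mat n n" "eigenvalue A \<mu>"
  shows "eigenvalue (A ^\<^sub>m k) (\<mu> ^ k)"
  using assms eigenvector_pow[OF assms(1)] unfolding eigenvalue_def eigenvector_def by auto

lemma eigenvalue_norm_le_subinvariant:
  fixes M :: "real mat"
  assumes M: "M \<in> carrier_mat m m" and nn: "nonneg_mat M" and x: "x \<in> carrier_vec m"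
    and pos: "\<forall>i<m. 0 < x $ i" and sub: "M *\<^sub>v x \<le> \<beta> \<cdot>\<^sub>v x"
    and ev: "eigenvalue (map_mat complex_of_real M) \<mu>"
  shows "norm \<mu> \<le> \<beta>"
proof -
  obtain v where v: "v \<in> carrier_vec m" "v \<noteq> 0\<^sub>v m"
    and Mv: "map_mat complex_of_real M *\<^sub>v v = \<mu> \<cdot>\<^sub>v v"
    using ev M unfolding eigenvalue_def eigenvector_def by auto
  obtain j where j: "j < m" "v $ j \<noteq> 0"
    using v by (metis carrier_vecD eq_vecI index_zero_vec)
  define r where "r k = norm (v $ k) / x $ k" for k
  define t where "t = Max (r ` {..<m})"
  obtain i0 where i0: "i0 < m" "r i0 = t"
    using Max_in[of "r ` {..<m}"] j unfolding t_def by fastforce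
  have bound: "norm (v $ k) \<le> t * x $ k" if "k < m" for k
    using Max_ge[of "r ` {..<m}" "r k"] that pos unfolding t_def r_def by (simp add: divide_le_eq)
  have "0 < t * x $ j" using bound[OF j(1)] j(2) by (smt (verit) zero_less_norm_iff)
  then have t: "0 < t" using pos[rule_format, OF j(1)] by (simp add: zero_less_mult_iff)
  have vi0: "norm (v $ i0) = t * x $ i0" using i0 pos unfolding r_def by auto
  have "norm \<mu> * norm (v $ i0) = norm (\<Sum>k<m. complex_of_real (M $$ (i0,k)) * v $ k)"
    using arg_cong[OF Mv, of "\<lambda>w. w $ i0"] M v i0
    by (simp add: scalar_prod_def lessThan_atLeast0 norm_mult)
  also have "\<dots> \<le> (\<Sum>k<m. M $$ (i0,k) * norm (v $ k))"
    using nn M i0 unfolding nonneg_mat_def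
    by (auto intro!: order_trans[OF norm_sum] sum_mono simp: norm_mult)
  also have "\<dots> \<le> (\<Sum>k<m. M $$ (i0,k) * (t * x $ k))"
    using nn M i0 bound unfolding nonneg_mat_def by (intro sum_mono mult_left_mono) auto
  also have "\<dots> = t * (M *\<^sub>v x) $ i0"
    using M x i0 by (simp add: scalar_prod_def lessThan_atLeast0 sum_distrib_left mult_ac)
  also have "\<dots> \<le> t * (\<beta> * x $ i0)"
    using sub M x i0 t unfolding less_eq_vec_def by simp
  also have "\<dots> = \<beta> * norm (v $ i0)" using vi0 by simp
  finally show ?thesis using vi0 t pos i0 by simp
qed

lemma eigenvalue_norm_lt_1_strict_subinvariant:
  fixes M :: "real mat"
  assumes M: "M \<in> carrier_mat m m" and nn: "nonneg_mat M" and x: "x \<in> carrier_vec m"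
    and pos: "\<forall>i<m. 0 < x $ i" and strict: "\<forall>i<m. (M *\<^sub>v x) $ i < x $ i"
    and ev: "eigenvalue (map_mat complex_of_real M) \<mu>"
  shows "norm \<mu> < 1"
proof -
  have "0 < m" using eigenvalue_imp_nonzero_dim[OF _ ev] M by simp
  define q where "q i = (M *\<^sub>v x) $ i / x $ i" for i
  define \<beta> where "\<beta> = Max (q ` {..<m})"
  have "\<beta> \<in> q ` {..<m}" unfolding \<beta>_def using \<open>0 < m\<close> by (intro Max_in) auto
  then have "\<beta> < 1" using strict pos unfolding q_def by (auto simp: divide_less_eq)
  moreover have "(M *\<^sub>v x) $ i \<le> \<beta> * x $ i" if "i < m" for i
  proof -
    have "q i \<le> \<beta>" unfolding \<beta>_def by (rule Max_ge) (use that in auto)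
    then show ?thesis using pos that unfolding q_def by (simp add: divide_le_eq)
  qed
  then have "M *\<^sub>v x \<le> \<beta> \<cdot>\<^sub>v x" using M x by (auto simp: less_eq_vec_def)
  ultimately show ?thesis
    using eigenvalue_norm_le_subinvariant[OF M nn x pos _ ev] by fastforce
qed

lemma rho_le_subinvariant:
  fixes M :: "real mat"
  assumes M: "M \<in> carrier_mat m m" and "0 < m" "nonneg_mat M" "x \<in> carrier_vec m"
    "\<forall>i<m. 0 < x $ i" "M *\<^sub>v x \<le> \<beta> \<cdot>\<^sub>v x"
  shows "rho M \<le> \<beta>"
  by (metis assms eigenvalue_norm_le_subinvariant rho_eq_norm_eigenvalue)

lemma rho_lt_1_pow_strict_subinvariant:
  fixes W :: "real mat"
  assumes W: "W \<in> carrier_mat m m" and m: "0 < m" and nn: "nonneg_mat W" and k: "0 < k"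
    and x: "x \<in> carrier_vec m" and pos: "\<forall>i<m. 0 < x $ i"
    and strict: "\<forall>i<m. (W ^\<^sub>m k *\<^sub>v x) $ i < x $ i"
  shows "rho W < 1"
proof -
  have "norm \<mu> < 1" if ev: "eigenvalue (map_mat complex_of_real W) \<mu>" for \<mu>
  proof -
    have "eigenvalue (map_mat complex_of_real (W ^\<^sub>m k)) (\<mu> ^ k)"
      unfolding of_real_hom.mat_hom_pow[OF W] by (rule eigenvalue_pow_mat[OF _ ev]) (use W in simp)
    then have "norm (\<mu> ^ k) < 1"
      by (rule eigenvalue_norm_lt_1_strict_subinvariant[OF pow_carrier_mat[OF W]
            nonneg_mat_pow[OF W nn] x pos strict])
    then have "norm \<mu> ^ k < 1 ^ k" by (simp add: norm_power)
    then show ?thesis by (rule power_less_imp_less_base) simp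
  qed
  then show ?thesis using rho_eq_norm_eigenvalue[OF W m] by metis
qed

lemma mat_pow_entry_bound:
  fixes W :: "real mat"
  assumes W: "W \<in> carrier_mat m m" and m: "0 < m" and lt: "rho W < b"
  obtains c where "\<And>k i j. i < m \<Longrightarrow> j < m \<Longrightarrow> (W ^\<^sub>m k) $$ (i,j) \<le> c * b ^ k"
proof -
  have b: "0 < b" using rho_nonneg[OF W m] lt by simp
  let ?Wc = "map_mat complex_of_real W"
  define V where "V = complex_of_real (1 / b) \<cdot>\<^sub>m ?Wc"
  have Wc: "?Wc \<in> carrier_mat m m" using W by simp
  then have V: "V \<in> carrier_mat m m" unfolding V_def by simp
  have "spectral_radius V < 1"
  proof -
    obtain \<mu> where \<mu>: "eigenvalue V \<mu>" "spectral_radius V = norm \<mu>"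
      using spectral_radius_mem_max(1)[OF V m] unfolding spectrum_def by auto
    have "complex_of_real b \<cdot>\<^sub>m V = ?Wc"
      using b unfolding V_def by (intro eq_matI) auto
    then have "eigenvalue ?Wc (complex_of_real b * \<mu>)"
      using eigenvalue_smult_mat[OF V \<mu>(1)] by metis
    then have "b * norm \<mu> \<le> rho W"
      using eigenvalue_norm_le_rho[OF W] b by (fastforce simp: norm_mult)
    then show ?thesis using \<mu>(2) lt b by (smt (verit) mult_le_cancel_left1 norm_ge_zero)
  qed
  then obtain c where c: "\<And>k. norm_bound (V ^\<^sub>m k) c"
    using spectral_radius_jnf_norm_bound_less_1_upper_triangular[OF V] by blast
  show ?thesis
  proof
    fix k i j assume ij: "i < m" "j < m"
    have "V ^\<^sub>m k = complex_of_real ((1 / b) ^ k) \<cdot>\<^sub>m map_mat complex_of_real (W ^\<^sub>m k)"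
      unfolding V_def pow_mat_smult[OF Wc] of_real_hom.mat_hom_pow[OF W] by simp
    then have "(V ^\<^sub>m k) $$ (i,j) = complex_of_real ((1 / b) ^ k * (W ^\<^sub>m k) $$ (i,j))"
      using ij W by simp
    moreover have "norm ((V ^\<^sub>m k) $$ (i,j)) \<le> c"
      using c[of k] ij V unfolding norm_bound_def by simp
    ultimately have "\<bar>(1 / b) ^ k * (W ^\<^sub>m k) $$ (i,j)\<bar> \<le> c" by (metis norm_of_real)
    then show "(W ^\<^sub>m k) $$ (i,j) \<le> c * b ^ k"
      using b by (simp add: power_one_over divide_le_eq mult.commute)
  qed
qed

lemma rho_lt_eventually_pow_row_sums_le:
  fixes W :: "real mat"
  assumes W: "W \<in> carrier_mat m m" and m: "0 < m" and lt: "rho W < \<beta>"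
  shows "\<forall>\<^sub>F k in sequentially. \<forall>i<m. (W ^\<^sub>m k *\<^sub>v vec m (\<lambda>_. 1)) $ i \<le> \<beta> ^ k"
proof -
  define b where "b = (rho W + \<beta>) / 2"
  have b: "rho W < b" "b < \<beta>" "0 < b" using lt rho_nonneg[OF W m] unfolding b_def by auto
  obtain c where c: "\<And>k i j. i < m \<Longrightarrow> j < m \<Longrightarrow> (W ^\<^sub>m k) $$ (i,j) \<le> c * b ^ k"
    using mat_pow_entry_bound[OF W m b(1)] by blast
  have "(\<lambda>k. m * c * (b / \<beta>) ^ k) \<longlonglongrightarrow> 0"
    using b by (intro tendsto_mult_right_zero LIMSEQ_power_zero) auto
  then have "\<forall>\<^sub>F k in sequentially. m * c * (b / \<beta>) ^ k < 1"
    by (rule order_tendstoD) simp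
  then show ?thesis
  proof (rule eventually_mono, intro allI impI)
    fix k i assume small: "m * c * (b / \<beta>) ^ k < 1" and i: "i < m"
    have "(W ^\<^sub>m k *\<^sub>v vec m (\<lambda>_. 1)) $ i = (\<Sum>j<m. (W ^\<^sub>m k) $$ (i,j))"
      using W i by (simp add: scalar_prod_def lessThan_atLeast0)
    also have "\<dots> \<le> (\<Sum>j<m. c * b ^ k)" using c i by (intro sum_mono) auto
    also have "\<dots> = m * c * (b / \<beta>) ^ k * \<beta> ^ k"
      using b by (simp add: power_divide)
    also have "\<dots> \<le> \<beta> ^ k" using small b by simp
    finally show "(W ^\<^sub>m k *\<^sub>v vec m (\<lambda>_. 1)) $ i \<le> \<beta> ^ k" .
  qed
qed

(* A partial sum of the Neumann series of \<open>(\<beta>I - W)\<^sup>-\<^sup>1\<close> applied to the all-ones vector. *)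
definition truncated_neumann :: "real mat \<Rightarrow> real \<Rightarrow> nat \<Rightarrow> real vec" where
  "truncated_neumann W \<beta> N =
    vec (dim_row W) (\<lambda>i. \<Sum>k\<le>N. (W ^\<^sub>m k *\<^sub>v vec (dim_row W) (\<lambda>_. 1)) $ i / \<beta> ^ Suc k)"

lemma truncated_neumann_pos:
  fixes W :: "real mat"
  assumes W: "W \<in> carrier_mat m m" and nn: "nonneg_mat W" and \<beta>: "0 < \<beta>" and i: "i < m"
  shows "0 < truncated_neumann W \<beta> N $ i"
proof -
  define s where "s k = W ^\<^sub>m k *\<^sub>v vec m (\<lambda>_. 1)" for k
  have "s k $ i \<ge> 0" for k
    using nonneg_mat_pow[OF W nn, of k] W i unfolding s_def nonneg_mat_def
    by (auto simp: scalar_prod_def intro!: sum_nonneg)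
  then have "s 0 $ i / \<beta> ^ Suc 0 \<le> (\<Sum>k\<le>N. s k $ i / \<beta> ^ Suc k)"
    using \<beta> by (intro member_le_sum) auto
  moreover have "0 < s 0 $ i / \<beta> ^ Suc 0" using W i \<beta> unfolding s_def by simp
  moreover have "truncated_neumann W \<beta> N $ i = (\<Sum>k\<le>N. s k $ i / \<beta> ^ Suc k)"
    using W i unfolding truncated_neumann_def s_def by auto
  ultimately show ?thesis by linarith
qed

lemma truncated_neumann_subinvariant:
  fixes W :: "real mat"
  assumes W: "W \<in> carrier_mat m m" and \<beta>: "0 < \<beta>"
    and tail: "\<forall>i<m. (W ^\<^sub>m Suc N *\<^sub>v vec m (\<lambda>_. 1)) $ i \<le> \<beta> ^ Suc N"
  shows "W *\<^sub>v truncated_neumann W \<beta> N \<le> \<beta> \<cdot>\<^sub>v truncated_neumann W \<beta> N"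
proof -
  define s where "s k = W ^\<^sub>m k *\<^sub>v vec m (\<lambda>_. 1)" for k
  define x where "x = truncated_neumann W \<beta> N"
  have x: "x = vec m (\<lambda>i. \<Sum>k\<le>N. s k $ i / \<beta> ^ Suc k)"
    using W unfolding x_def truncated_neumann_def s_def by auto
  have s_dim: "dim_vec (s k) = m" for k
    using W unfolding s_def by simp
  have s_Suc: "s (Suc k) = W *\<^sub>v s k" for k
    unfolding s_def pow_mat_Suc_left[OF W]
    by (rule assoc_mult_mat_vec[OF W pow_carrier_mat[OF W]]) simp
  have "(W *\<^sub>v x) $ i \<le> \<beta> * x $ i" if i: "i < m" for i
  proof -
    have "(W *\<^sub>v x) $ i = (\<Sum>l<m. W $$ (i,l) * (\<Sum>k\<le>N. s k $ l / \<beta> ^ Suc k))"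
      using W i unfolding x by (simp add: scalar_prod_def lessThan_atLeast0)
    also have "\<dots> = (\<Sum>k\<le>N. (\<Sum>l<m. W $$ (i,l) * s k $ l) / \<beta> ^ Suc k)"
      unfolding sum_distrib_left sum_divide_distrib by (subst sum.swap) (simp add: mult_ac)
    also have "\<dots> = (\<Sum>k\<le>N. (W *\<^sub>v s k) $ i / \<beta> ^ Suc k)"
      using W i by (simp add: scalar_prod_def lessThan_atLeast0 s_dim)
    also have "\<dots> = (\<Sum>k\<le>Suc N. s k $ i / \<beta> ^ k) - s 0 $ i"
      unfolding s_Suc[symmetric] sum.atMost_Suc_shift by simp
    also have "\<dots> = (\<Sum>k\<le>N. s k $ i / \<beta> ^ k) + s (Suc N) $ i / \<beta> ^ Suc N - 1"
      using W i unfolding s_def by simp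
    also have "\<dots> \<le> (\<Sum>k\<le>N. s k $ i / \<beta> ^ k)"
      using tail i \<beta> unfolding s_def by (simp add: divide_le_eq)
    also have "\<dots> = \<beta> * x $ i"
      unfolding x using i \<beta> by (simp add: sum_distrib_left)
    finally show ?thesis .
  qed
  then show ?thesis using W unfolding x_def[symmetric] x by (auto simp: less_eq_vec_def)
qed

lemma subinvariant_vector_exists:
  fixes W :: "real mat"
  assumes W: "W \<in> carrier_mat m m" and m: "0 < m" and nn: "nonneg_mat W" and lt: "rho W < \<beta>"
  obtains x where "x \<in> carrier_vec m" "\<forall>i<m. 0 < x $ i" "W *\<^sub>v x \<le> \<beta> \<cdot>\<^sub>v x"
proof -
  have \<beta>: "0 < \<beta>" using rho_nonneg[OF W m] lt by simp
  obtain N where N: "\<forall>i<m. (W ^\<^sub>m Suc N *\<^sub>v vec m (\<lambda>_. 1)) $ i \<le> \<beta> ^ Suc N"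
    using rho_lt_eventually_pow_row_sums_le[OF W m lt] unfolding eventually_sequentially
    by (metis le_SucI order_refl)
  show ?thesis
  proof (rule that)
    show "truncated_neumann W \<beta> N \<in> carrier_vec m"
      using W unfolding truncated_neumann_def by auto
    show "\<forall>i<m. 0 < truncated_neumann W \<beta> N $ i"
      using truncated_neumann_pos[OF W nn \<beta>] by blast
    show "W *\<^sub>v truncated_neumann W \<beta> N \<le> \<beta> \<cdot>\<^sub>v truncated_neumann W \<beta> N"
      by (rule truncated_neumann_subinvariant[OF W \<beta> N])
  qed
qed


section \<open>Block companion matrices\<close>

definition block_companion :: "nat \<Rightarrow> real mat \<Rightarrow> real mat \<Rightarrow> real mat" where
  "block_companion n B C = four_block_mat B C (1\<^sub>m n) (0\<^sub>m n n)"

lemma block_companion_carrier: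
  "B \<in> carrier_mat n n \<Longrightarrow> block_companion n B C \<in> carrier_mat (n + n) (n + n)"
  unfolding block_companion_def by simp

lemma block_companion_nonneg:
  assumes "B \<in> carrier_mat n n" "C \<in> carrier_mat n n" "nonneg_mat B" "nonneg_mat C"
  shows "nonneg_mat (block_companion n B C)"
  using assms unfolding block_companion_def nonneg_mat_def by auto

lemma block_companion_mult_vec:
  assumes B: "B \<in> carrier_mat n n" and C: "C \<in> carrier_mat n n"
    and u: "u \<in> carrier_vec n" and v: "v \<in> carrier_vec n"
  shows "block_companion n B C *\<^sub>v (u @\<^sub>v v) = (B *\<^sub>v u + C *\<^sub>v v) @\<^sub>v u"
proof -
  have "0\<^sub>m n n *\<^sub>v v = 0\<^sub>v n" using v by (intro eq_vecI) (auto simp: scalar_prod_def)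
  then show ?thesis
    using four_block_mat_mult_vec[OF B C one_carrier_mat zero_carrier_mat u v] u v
    unfolding block_companion_def by simp
qed

lemma rho_block_companion_lt_1:
  assumes B: "B \<in> carrier_mat n n" and C: "C \<in> carrier_mat n n"
    and nB: "nonneg_mat B" and nC: "nonneg_mat C" and n: "0 < n"
    and u: "u \<in> carrier_vec n" and pos: "\<forall>i<n. 0 < u $ i"
    and strict: "\<forall>i<n. (B *\<^sub>v u + C *\<^sub>v u) $ i < u $ i"
  shows "rho (block_companion n B C) < 1"
proof -
  define W where "W = block_companion n B C"
  have W: "W \<in> carrier_mat (n + n) (n + n)" unfolding W_def using block_companion_carrier[OF B] .
  have nW: "nonneg_mat W" unfolding W_def using block_companion_nonneg[OF B C nB nC] .
  define y where "y = B *\<^sub>v u + C *\<^sub>v u"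
  have y: "y \<in> carrier_vec n" unfolding y_def using B C u by simp
  have "y \<le> u" using strict y u C unfolding y_def less_eq_vec_def by (auto intro: less_imp_le)
  then have By: "B *\<^sub>v y \<le> B *\<^sub>v u" using mult_mat_vec_mono[OF B nB _ u] by blast
  \<comment> \<open>\<open>W (u, u) = (y, u)\<close> is only weakly below \<open>(u, u)\<close>; one more step makes it strict\<close>
  have W2: "(W ^\<^sub>m 2) *\<^sub>v (u @\<^sub>v u) = (B *\<^sub>v y + C *\<^sub>v u) @\<^sub>v y"
    using W u y unfolding W_def
    by (simp add: numeral_2_eq_2 block_companion_mult_vec[OF B C] y_def[symmetric]
        flip: assoc_mult_mat_vec[OF block_companion_carrier[OF B] block_companion_carrier[OF B]])
  have strict2: "\<forall>i<n + n. ((W ^\<^sub>m 2) *\<^sub>v (u @\<^sub>v u)) $ i < (u @\<^sub>v u) $ i"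
  proof (intro allI impI)
    fix i assume i: "i < n + n"
    show "((W ^\<^sub>m 2) *\<^sub>v (u @\<^sub>v u)) $ i < (u @\<^sub>v u) $ i"
    proof (cases "i < n")
      case True
      have "(B *\<^sub>v y) $ i \<le> (B *\<^sub>v u) $ i" using By B True unfolding less_eq_vec_def by simp
      moreover have "(B *\<^sub>v u) $ i + (C *\<^sub>v u) $ i < u $ i" using strict True B C u by simp
      moreover have "((W ^\<^sub>m 2) *\<^sub>v (u @\<^sub>v u)) $ i = (B *\<^sub>v y) $ i + (C *\<^sub>v u) $ i"
        using True u y B C unfolding W2 by simp
      ultimately show ?thesis using True u by simp
    next
      case False
      then show ?thesis using i strict u y B C unfolding W2 y_def by simp
    qed
  qed
  have x: "u @\<^sub>v u \<in> carrier_vec (n + n)" and x_pos: "\<forall>i<n + n. 0 < (u @\<^sub>v u) $ i"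
    using u pos by auto
  show ?thesis
    using rho_lt_1_pow_strict_subinvariant[OF W _ nW _ x x_pos strict2] n unfolding W_def by simp
qed

lemma smult_append_vec: "a \<cdot>\<^sub>v (u @\<^sub>v v) = (a \<cdot>\<^sub>v u) @\<^sub>v (a \<cdot>\<^sub>v v)"
  by (intro eq_vecI) auto

lemma scaled_block_rows_mono:
  fixes B1 C1 B2 C2 :: "real mat"
  assumes B1: "B1 \<in> carrier_mat n n" and C1: "C1 \<in> carrier_mat n n"
    and B2: "B2 \<in> carrier_mat n n" and C2: "C2 \<in> carrier_mat n n"
    and B_le: "mat_le B2 B1" and BC_le: "mat_le (B1 + C1) (B2 + C2)" and \<beta>: "\<beta> \<le> 1"
    and z: "z \<in> carrier_vec n" and z_nonneg: "\<forall>j<n. 0 \<le> z $ j"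
  shows "B1 *\<^sub>v (\<beta> \<cdot>\<^sub>v z) + C1 *\<^sub>v z \<le> B2 *\<^sub>v (\<beta> \<cdot>\<^sub>v z) + C2 *\<^sub>v z"
proof -
  have row: "(B *\<^sub>v (\<beta> \<cdot>\<^sub>v z) + C *\<^sub>v z) $ i = (\<Sum>j<n. (\<beta> * B $$ (i,j) + C $$ (i,j)) * z $ j)"
    if "B \<in> carrier_mat n n" "C \<in> carrier_mat n n" "i < n" for B C i
    using that z
    by (simp add: scalar_prod_def lessThan_atLeast0 sum.distrib sum_distrib_left algebra_simps)
  have "(\<Sum>j<n. (\<beta> * B1 $$ (i,j) + C1 $$ (i,j)) * z $ j)
      \<le> (\<Sum>j<n. (\<beta> * B2 $$ (i,j) + C2 $$ (i,j)) * z $ j)" if i: "i < n" for i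
  proof (intro sum_mono mult_right_mono)
    fix j assume "j \<in> {..<n}"
    then have j: "j < n" by simp
    have "B2 $$ (i,j) \<le> B1 $$ (i,j)" "B1 $$ (i,j) + C1 $$ (i,j) \<le> B2 $$ (i,j) + C2 $$ (i,j)"
      using B_le BC_le i j B1 C1 B2 C2 unfolding mat_le_def by auto
    moreover from this(1) have "(1 - \<beta>) * B2 $$ (i,j) \<le> (1 - \<beta>) * B1 $$ (i,j)"
      using \<beta> by (intro mult_left_mono) auto
    ultimately show "\<beta> * B1 $$ (i,j) + C1 $$ (i,j) \<le> \<beta> * B2 $$ (i,j) + C2 $$ (i,j)"
      by (simp add: algebra_simps)
    show "0 \<le> z $ j" using z_nonneg j by simp
  qed
  then show ?thesis using row[OF B1 C1] row[OF B2 C2] B1 C1 B2 C2 unfolding less_eq_vec_def by simp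
qed

lemma block_companion_subinvariant_transfer:
  assumes B1: "B1 \<in> carrier_mat n n" and C1: "C1 \<in> carrier_mat n n"
    and B2: "B2 \<in> carrier_mat n n" and C2: "C2 \<in> carrier_mat n n" and nC2: "nonneg_mat C2"
    and B_le: "mat_le B2 B1" and BC_le: "mat_le (B1 + C1) (B2 + C2)"
    and \<beta>: "0 < \<beta>" "\<beta> \<le> 1"
    and x: "x \<in> carrier_vec (n + n)" and pos: "\<forall>i<n + n. 0 < x $ i"
    and sub: "block_companion n B2 C2 *\<^sub>v x \<le> \<beta> \<cdot>\<^sub>v x"
  obtains x' where "x' \<in> carrier_vec (n + n)" "\<forall>i<n + n. 0 < x' $ i"
    "block_companion n B1 C1 *\<^sub>v x' \<le> \<beta> \<cdot>\<^sub>v x'"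
proof -
  define u where "u = vec_first x n"
  define v where "v = vec_last x n"
  have u: "u \<in> carrier_vec n" and v: "v \<in> carrier_vec n" unfolding u_def v_def by auto
  have x_uv: "x = u @\<^sub>v v" unfolding u_def v_def using x by simp
  have "(B2 *\<^sub>v u + C2 *\<^sub>v v) @\<^sub>v u \<le> (\<beta> \<cdot>\<^sub>v u) @\<^sub>v (\<beta> \<cdot>\<^sub>v v)"
    using sub unfolding x_uv block_companion_mult_vec[OF B2 C2 u v] smult_append_vec .
  moreover have "B2 *\<^sub>v u + C2 *\<^sub>v v \<in> carrier_vec n" using B2 C2 u v by simp
  ultimately have top2: "B2 *\<^sub>v u + C2 *\<^sub>v v \<le> \<beta> \<cdot>\<^sub>v u" and bot2: "u \<le> \<beta> \<cdot>\<^sub>v v"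
    by (simp_all add: append_vec_le u)
  define z where "z = (1 / \<beta>) \<cdot>\<^sub>v u"
  have z: "z \<in> carrier_vec n" unfolding z_def using u by simp
  have u_z: "u = \<beta> \<cdot>\<^sub>v z" unfolding z_def using u \<beta> by (intro eq_vecI) auto
  have u_pos: "\<forall>j<n. 0 < u $ j"
    using pos u v unfolding x_uv by (metis index_append_vec(1) trans_less_add1 carrier_vecD)
  have z_pos: "\<forall>j<n. 0 < z $ j" using u_pos u \<beta> unfolding z_def by simp
  have "z \<le> v" using bot2 u v \<beta> unfolding z_def less_eq_vec_def by (auto simp: field_simps)
  then have "C2 *\<^sub>v z \<le> C2 *\<^sub>v v" by (rule mult_mat_vec_mono[OF C2 nC2 _ v])
  have "B1 *\<^sub>v u + C1 *\<^sub>v z \<le> B2 *\<^sub>v u + C2 *\<^sub>v z"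
    using scaled_block_rows_mono[OF B1 C1 B2 C2 B_le BC_le \<beta>(2) z] z_pos
    unfolding u_z[symmetric] by (simp add: less_imp_le)
  also have "\<dots> \<le> B2 *\<^sub>v u + C2 *\<^sub>v v"
    using \<open>C2 *\<^sub>v z \<le> C2 *\<^sub>v v\<close> B2 C2 u z v unfolding less_eq_vec_def by auto
  also have "\<dots> \<le> \<beta> \<cdot>\<^sub>v u" by (rule top2)
  finally have top1: "B1 *\<^sub>v u + C1 *\<^sub>v z \<le> \<beta> \<cdot>\<^sub>v u" .
  show ?thesis
  proof (rule that)
    show "u @\<^sub>v z \<in> carrier_vec (n + n)" using u z by simp
    show "\<forall>i<n + n. 0 < (u @\<^sub>v z) $ i" using u_pos z_pos u z by simp
    show "block_companion n B1 C1 *\<^sub>v (u @\<^sub>v z) \<le> \<beta> \<cdot>\<^sub>v (u @\<^sub>v z)"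
      unfolding block_companion_mult_vec[OF B1 C1 u z] smult_append_vec
      using append_vec_le[of "B1 *\<^sub>v u + C1 *\<^sub>v z" n "\<beta> \<cdot>\<^sub>v u"] top1 B1 C1 u z
      by (simp add: u_z[symmetric])
  qed
qed

lemma rho_block_companion_mono:
  assumes B1: "B1 \<in> carrier_mat n n" and C1: "C1 \<in> carrier_mat n n"
    and B2: "B2 \<in> carrier_mat n n" and C2: "C2 \<in> carrier_mat n n"
    and nn: "nonneg_mat B1" "nonneg_mat C1" "nonneg_mat B2" "nonneg_mat C2" and n: "0 < n"
    and B_le: "mat_le B2 B1" and BC_le: "mat_le (B1 + C1) (B2 + C2)"
    and lt: "rho (block_companion n B2 C2) < 1"
  shows "rho (block_companion n B1 C1) \<le> rho (block_companion n B2 C2)"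
proof (rule dense_ge_bounded[OF lt])
  fix \<beta> assume \<beta>: "rho (block_companion n B2 C2) < \<beta>" "\<beta> < 1"
  have W1: "block_companion n B1 C1 \<in> carrier_mat (n + n) (n + n)"
    and W2: "block_companion n B2 C2 \<in> carrier_mat (n + n) (n + n)"
    using block_companion_carrier B1 B2 by auto
  have "0 < \<beta>" using rho_nonneg[OF W2] n \<beta>(1) by simp
  obtain x where "x \<in> carrier_vec (n + n)" "\<forall>i<n + n. 0 < x $ i"
    "block_companion n B2 C2 *\<^sub>v x \<le> \<beta> \<cdot>\<^sub>v x"
    using subinvariant_vector_exists[OF W2 _ block_companion_nonneg[OF B2 C2 nn(3,4)] \<beta>(1)] n
    by auto
  then obtain x' where "x' \<in> carrier_vec (n + n)" "\<forall>i<n + n. 0 < x' $ i"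
    "block_companion n B1 C1 *\<^sub>v x' \<le> \<beta> \<cdot>\<^sub>v x'"
    using block_companion_subinvariant_transfer[OF B1 C1 B2 C2 nn(4) B_le BC_le \<open>0 < \<beta>\<close>] \<beta>(2)
    by auto
  then show "rho (block_companion n B1 C1) \<le> \<beta>"
    using rho_le_subinvariant[OF W1 _ block_companion_nonneg[OF B1 C1 nn(1,2)]] n by auto
qed


section \<open>Double splittings\<close>

lemma double_splitting_minv:
  assumes "double_splitting n A P R S"
  shows "P * minv P = 1\<^sub>m n" "minv P * P = 1\<^sub>m n" "minv P \<in> carrier_mat n n"
proof -
  from assms have "P \<in> carrier_mat n n" "invertible_mat P" unfolding double_splitting_def by auto
  from minv_mat[OF this(1) invertible_mat_det_nonzero[OF this(2)]]
  show "P * minv P = 1\<^sub>m n" "minv P * P = 1\<^sub>m n" "minv P \<in> carrier_mat n n" by auto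
qed

lemma minv_mult_double_splitting:
  assumes sp: "double_splitting n A P R S"
  shows "minv P * A = 1\<^sub>m n - minv P * R + minv P * S"
proof -
  have c: "P \<in> carrier_mat n n" "R \<in> carrier_mat n n" "S \<in> carrier_mat n n" and A: "A = P - R + S"
    using sp unfolding double_splitting_def by auto
  note Q = double_splitting_minv[OF sp]
  have "minv P * A = minv P * (P - R) + minv P * S"
    unfolding A using mult_add_distrib_mat[OF Q(3) minus_carrier_mat[OF c(2)] c(3)] c by simp
  also have "\<dots> = minv P * P - minv P * R + minv P * S"
    using mult_minus_distrib_mat[OF Q(3) c(1,2)] by simp
  finally show ?thesis using Q by simp
qed

lemma double_splitting_blocks_carrier:
  assumes sp: "double_splitting n A P R S" and sp3: "double_splitting n A P3 R3 S3"
  shows "minv P3 * R3 - minv P3 * S3 * minv P * R \<in> carrier_mat n n"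
    and "minv P3 * S3 * minv P * S \<in> carrier_mat n n"
proof -
  have "minv P3 * S3 * minv P \<in> carrier_mat n n"
    using sp3 double_splitting_minv(3)[OF sp] double_splitting_minv(3)[OF sp3]
    unfolding double_splitting_def by auto
  then show "minv P3 * R3 - minv P3 * S3 * minv P * R \<in> carrier_mat n n"
    and "minv P3 * S3 * minv P * S \<in> carrier_mat n n"
    using sp unfolding double_splitting_def by (auto intro: minus_carrier_mat)
qed

lemma preconditioned_Ahat:
  assumes sp: "double_splitting n A P R S" and sp3: "double_splitting n A P3 R3 S3"
  shows "minv P3 * ((1\<^sub>m n - S3 * minv P) * A) =
      1\<^sub>m n - (minv P3 * R3 - minv P3 * S3 * minv P * R) - minv P3 * S3 * minv P * S"
proof -
  have A: "A \<in> carrier_mat n n" and R: "R \<in> carrier_mat n n" and S: "S \<in> carrier_mat n n"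
    and R3: "R3 \<in> carrier_mat n n" and S3: "S3 \<in> carrier_mat n n"
    using sp sp3 unfolding double_splitting_def by auto
  define Q where "Q = minv P"
  define Q3 where "Q3 = minv P3"
  define X where "X = Q3 * S3"
  have Q: "Q \<in> carrier_mat n n" and Q3: "Q3 \<in> carrier_mat n n" and X: "X \<in> carrier_mat n n"
    using double_splitting_minv(3)[OF sp] double_splitting_minv(3)[OF sp3] S3
    unfolding Q_def Q3_def X_def by auto
  have XK: "Q3 * S3 * Q * R = X * (Q * R)" and XL: "Q3 * S3 * Q * S = X * (Q * S)"
    unfolding X_def using assoc_mult_mat[OF mult_carrier_mat[OF Q3 S3] Q] R S by blast+
  have Q3_A: "Q3 * ((1\<^sub>m n - S3 * Q) * A) = Q3 * A - X * (Q * A)"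
  proof -
    have "(1\<^sub>m n - S3 * Q) * A = A - S3 * (Q * A)"
      using minus_mult_distrib_mat[OF one_carrier_mat mult_carrier_mat[OF S3 Q] A]
        assoc_mult_mat[OF S3 Q A] A by simp
    then have "Q3 * ((1\<^sub>m n - S3 * Q) * A) = Q3 * A - Q3 * (S3 * (Q * A))"
      using mult_minus_distrib_mat[OF Q3 A mult_carrier_mat[OF S3 mult_carrier_mat[OF Q A]]] by simp
    also have "Q3 * (S3 * (Q * A)) = X * (Q * A)"
      unfolding X_def by (rule assoc_mult_mat[OF Q3 S3 mult_carrier_mat[OF Q A], symmetric])
    finally show ?thesis .
  qed
  have Q3A: "Q3 * A = 1\<^sub>m n - Q3 * R3 + X"
    unfolding Q3_def X_def by (rule minv_mult_double_splitting[OF sp3])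
  have QA: "Q * A = 1\<^sub>m n - Q * R + Q * S"
    unfolding Q_def by (rule minv_mult_double_splitting[OF sp])
  have "X * (Q * A) = X * (1\<^sub>m n - Q * R) + X * (Q * S)"
    unfolding QA using mult_add_distrib_mat[OF X minus_carrier_mat[OF mult_carrier_mat[OF Q R]]] Q S
    by simp
  also have "\<dots> = X - X * (Q * R) + X * (Q * S)"
    using mult_minus_distrib_mat[OF X one_carrier_mat mult_carrier_mat[OF Q R]] X by simp
  finally have XQA: "X * (Q * A) = X - X * (Q * R) + X * (Q * S)" .
  have "Q3 * ((1\<^sub>m n - S3 * Q) * A) = 1\<^sub>m n - (Q3 * R3 - X * (Q * R)) - X * (Q * S)"
    unfolding Q3_A Q3A XQA using Q Q3 X R S R3 by (intro eq_matI) simp_all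
  then show ?thesis unfolding Q_def[symmetric] Q3_def[symmetric] XK XL .
qed

lemma preconditioned_Rhat:
  assumes sp: "double_splitting n A P R S" and sp3: "double_splitting n A P3 R3 S3"
  shows "minv P3 * (R3 - S3 * minv P * R) = minv P3 * R3 - minv P3 * S3 * minv P * R"
proof -
  have R: "R \<in> carrier_mat n n" and R3: "R3 \<in> carrier_mat n n" and S3: "S3 \<in> carrier_mat n n"
    using sp sp3 unfolding double_splitting_def by auto
  note Q = double_splitting_minv(3)[OF sp] and Q3 = double_splitting_minv(3)[OF sp3]
  have "minv P3 * (R3 - S3 * minv P * R) = minv P3 * R3 - minv P3 * (S3 * minv P * R)"
    by (rule mult_minus_distrib_mat[OF Q3 R3 mult_carrier_mat[OF mult_carrier_mat[OF S3 Q] R]])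
  also have "minv P3 * (S3 * minv P * R) = minv P3 * S3 * minv P * R"
    by (simp only: assoc_mult_mat[OF Q3 S3 Q] assoc_mult_mat[OF Q3 mult_carrier_mat[OF S3 Q] R])
  finally show ?thesis .
qed

lemma double_splitting_blocks_nonneg:
  assumes sp: "double_weak_regular_splitting n A P R S"
    and sp3: "double_regular_splitting n A P3 R3 S3"
  shows "nonneg_mat (minv P3 * R3 - minv P3 * S3 * minv P * R)"
    and "nonneg_mat (minv P3 * S3 * minv P * S)"
proof -
  have R: "R \<in> carrier_mat n n" and S: "S \<in> carrier_mat n n"
    and nQR: "nonneg_mat (minv P * R)" and nQS: "nonpos_mat (minv P * S)"
    and R3: "R3 \<in> carrier_mat n n" and S3: "S3 \<in> carrier_mat n n"
    and nQ3: "nonneg_mat (minv P3)" and nR3: "nonneg_mat R3" and nS3: "nonpos_mat S3"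
    using sp sp3 unfolding double_weak_regular_splitting_def double_regular_splitting_def
      double_splitting_def by auto
  have Q: "minv P \<in> carrier_mat n n" and Q3: "minv P3 \<in> carrier_mat n n"
    using sp sp3 double_splitting_minv(3)
    unfolding double_weak_regular_splitting_def double_regular_splitting_def by blast+
  have X: "minv P3 * S3 \<in> carrier_mat n n" using Q3 S3 by simp
  have nX: "nonpos_mat (minv P3 * S3)" by (rule mult_nonneg_nonpos_mat[OF Q3 S3 nQ3 nS3])
  have assoc: "minv P3 * S3 * minv P * T = (minv P3 * S3) * (minv P * T)"
    if "T \<in> carrier_mat n n" for T
    using assoc_mult_mat[OF X Q that] .
  have "nonneg_mat (minv P3 * R3)" by (rule mult_nonneg_nonneg_mat[OF Q3 R3 nQ3 nR3])
  moreover have "nonpos_mat (minv P3 * S3 * minv P * R)"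
    unfolding assoc[OF R] by (rule mult_nonpos_nonneg_mat[OF X mult_carrier_mat[OF Q R] nX nQR])
  ultimately show "nonneg_mat (minv P3 * R3 - minv P3 * S3 * minv P * R)"
    using Q3 R3 X Q R by (intro nonneg_mat_minus_nonpos) auto
  show "nonneg_mat (minv P3 * S3 * minv P * S)"
    unfolding assoc[OF S] by (rule mult_nonpos_nonpos_mat[OF X mult_carrier_mat[OF Q S] nX nQS])
qed

lemma W_mat_block_companion:
  "W_mat n P3 R3 S3 P R S =
    block_companion n (minv P3 * R3 - minv P3 * S3 * minv P * R) (minv P3 * S3 * minv P * S)"
  unfolding W_mat_def block_companion_def ..

lemma preconditioned_strict_subinvariant_vector:
  assumes A: "A \<in> carrier_mat n n" and iA: "invertible_mat A"
    and sp: "double_splitting n A P R S" and sp3: "double_splitting n A P3 R3 S3"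
    and nQ3: "nonneg_mat (minv P3)" and spec: "1 \<notin> rspectrum (S3 * minv P)"
    and Ahat: "nonneg_mat (minv ((1\<^sub>m n - S3 * minv P) * A))"
  obtains u where "u \<in> carrier_vec n" "\<forall>i<n. 0 < u $ i"
    "\<forall>i<n. ((minv P3 * R3 - minv P3 * S3 * minv P * R) *\<^sub>v u + (minv P3 * S3 * minv P * S) *\<^sub>v u) $ i
      < u $ i"
proof -
  have S3: "S3 \<in> carrier_mat n n" and P3: "P3 \<in> carrier_mat n n"
    using sp3 unfolding double_splitting_def by auto
  note Q = double_splitting_minv[OF sp] and Q3 = double_splitting_minv[OF sp3]
  define B where "B = minv P3 * R3 - minv P3 * S3 * minv P * R"
  define C where "C = minv P3 * S3 * minv P * S"
  have B: "B \<in> carrier_mat n n" and C: "C \<in> carrier_mat n n"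
    unfolding B_def C_def using double_splitting_blocks_carrier[OF sp sp3] by auto
  have SQ: "S3 * minv P \<in> carrier_mat n n" using S3 Q(3) by simp
  define Ahat where "Ahat = (1\<^sub>m n - S3 * minv P) * A"
  have cAhat: "Ahat \<in> carrier_mat n n"
    unfolding Ahat_def by (rule mult_carrier_mat[OF minus_carrier_mat[OF SQ] A])
  have "det Ahat \<noteq> 0"
    unfolding Ahat_def by (rule det_one_minus_mult_nonzero[OF SQ A iA spec])
  note Ahat_inv = minv_mat[OF cAhat this]
  define e where "e = vec n (\<lambda>_. 1 :: real)"
  define u where "u = minv Ahat *\<^sub>v e"
  define d where "d = minv P3 *\<^sub>v e"
  have u: "u \<in> carrier_vec n" unfolding u_def e_def using Ahat_inv(3) by auto
  have u_pos: "\<forall>i<n. 0 < u $ i"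
    unfolding u_def e_def using nonneg_inverse_row_sum_pos[OF Ahat_inv(3) cAhat _ Ahat_inv(2)] Ahat
    unfolding Ahat_def by blast
  have d_pos: "\<forall>i<n. 0 < d $ i"
    unfolding d_def e_def using nonneg_inverse_row_sum_pos[OF Q3(3) P3 nQ3 Q3(2)] by blast
  have "Ahat *\<^sub>v u = e"
    unfolding u_def e_def using Ahat_inv cAhat by (simp flip: assoc_mult_mat_vec)
  then have "(minv P3 * Ahat) *\<^sub>v u = d" unfolding d_def using Q3(3) cAhat u by simp
  then have "(1\<^sub>m n - B - C) *\<^sub>v u = d"
    unfolding Ahat_def preconditioned_Ahat[OF sp sp3] B_def C_def .
  then have ud: "u - B *\<^sub>v u - C *\<^sub>v u = d"
    using B C u by (simp add: minus_mult_distrib_mat_vec[of _ n n] minus_carrier_mat)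
  have "(B *\<^sub>v u + C *\<^sub>v u) $ i = u $ i - d $ i" if "i < n" for i
    using arg_cong[OF ud, of "\<lambda>w. w $ i"] that B C u by simp
  then show ?thesis using that[OF u u_pos] d_pos unfolding B_def C_def by simp
qed

lemma rho_W_mat_lt_1:
  assumes n: "0 < n" and A: "A \<in> carrier_mat n n" and iA: "invertible_mat A"
    and sp: "double_weak_regular_splitting n A P R S"
    and sp3: "double_regular_splitting n A P3 R3 S3"
    and spec: "1 \<notin> rspectrum (S3 * minv P)"
    and Ahat: "nonneg_mat (minv ((1\<^sub>m n - S3 * minv P) * A))"
  shows "rho (W_mat n P3 R3 S3 P R S) < 1"
proof -
  have ds: "double_splitting n A P R S" and ds3: "double_splitting n A P3 R3 S3"
    and nQ3: "nonneg_mat (minv P3)"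
    using sp sp3 unfolding double_weak_regular_splitting_def double_regular_splitting_def by auto
  obtain u where "u \<in> carrier_vec n" "\<forall>i<n. 0 < u $ i"
    "\<forall>i<n. ((minv P3 * R3 - minv P3 * S3 * minv P * R) *\<^sub>v u + (minv P3 * S3 * minv P * S) *\<^sub>v u) $ i
      < u $ i"
    by (rule preconditioned_strict_subinvariant_vector[OF A iA ds ds3 nQ3 spec Ahat])
  then show ?thesis
    unfolding W_mat_block_companion
    using rho_block_companion_lt_1[OF double_splitting_blocks_carrier[OF ds ds3]
        double_splitting_blocks_nonneg[OF sp sp3] n]
    by blast
qed

theorem corollary3p12:
  fixes n :: nat and A P1 R1 S1 P2 R2 S2 P3 R3 S3 :: "real mat"
  assumes n: "0 < n"
    and mono: "A \<in> carrier_mat n n" "monotone_mat A"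
    and sp1: "double_weak_regular_splitting n A P1 R1 S1"
    and sp2: "double_weak_regular_splitting n A P2 R2 S2"
    and sp3: "double_regular_splitting n A P3 R3 S3"
    and spec1: "1 \<notin> rspectrum (S3 * minv P1)"
    and spec2: "1 \<notin> rspectrum (S3 * minv P2)"
    and Ahat1: "nonneg_mat (minv ((1\<^sub>m n - S3 * minv P1) * A))"
    and Ahat2: "nonneg_mat (minv ((1\<^sub>m n - S3 * minv P2) * A))"
    and cA: "mat_le (minv P3 * ((1\<^sub>m n - S3 * minv P2) * A)) (minv P3 * ((1\<^sub>m n - S3 * minv P1) * A))"
    and cR: "mat_le (minv P3 * (R3 - S3 * minv P2 * R2)) (minv P3 * (R3 - S3 * minv P1 * R1))"
  shows "rho (W_mat n P3 R3 S3 P1 R1 S1) \<le> rho (W_mat n P3 R3 S3 P2 R2 S2)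
       \<and> rho (W_mat n P3 R3 S3 P2 R2 S2) < 1"
proof -
  \<comment> \<open>only \<open>W\<^sub>2\<^sub>3\<close> needs a convergence proof\<close>
  have ds1: "double_splitting n A P1 R1 S1" and ds2: "double_splitting n A P2 R2 S2"
    and ds3: "double_splitting n A P3 R3 S3"
    using sp1 sp2 sp3
    unfolding double_weak_regular_splitting_def double_regular_splitting_def by auto
  have rho2: "rho (W_mat n P3 R3 S3 P2 R2 S2) < 1"
    using rho_W_mat_lt_1[OF n mono(1) _ sp2 sp3 spec2 Ahat2] mono(2)
    unfolding monotone_mat_def by blast
  define B1 where "B1 = minv P3 * R3 - minv P3 * S3 * minv P1 * R1"
  define C1 where "C1 = minv P3 * S3 * minv P1 * S1"
  define B2 where "B2 = minv P3 * R3 - minv P3 * S3 * minv P2 * R2"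
  define C2 where "C2 = minv P3 * S3 * minv P2 * S2"
  note blocks1 = double_splitting_blocks_carrier[OF ds1 ds3, folded B1_def C1_def]
    double_splitting_blocks_nonneg[OF sp1 sp3, folded B1_def C1_def]
  note blocks2 = double_splitting_blocks_carrier[OF ds2 ds3, folded B2_def C2_def]
    double_splitting_blocks_nonneg[OF sp2 sp3, folded B2_def C2_def]
  have "mat_le B2 B1"
    using cR unfolding preconditioned_Rhat[OF ds1 ds3]
      preconditioned_Rhat[OF ds2 ds3] B1_def B2_def .
  moreover have "mat_le (B1 + C1) (B2 + C2)"
    using cA unfolding preconditioned_Ahat[OF ds1 ds3]
      preconditioned_Ahat[OF ds2 ds3] B1_def[symmetric] C1_def[symmetric]
      B2_def[symmetric] C2_def[symmetric]
    by (rule mat_le_add_if_one_minus_le[OF blocks1(1,2) blocks2(1,2)])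
  ultimately have "rho (W_mat n P3 R3 S3 P1 R1 S1) \<le> rho (W_mat n P3 R3 S3 P2 R2 S2)"
    using rho_block_companion_mono[OF blocks1(1,2) blocks2(1,2) blocks1(3,4) blocks2(3,4) n] rho2
    unfolding W_mat_block_companion B1_def C1_def B2_def C2_def by blast
  with rho2 show ?thesis by blast
qed

end
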